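(* Let $R$ be a tolerance relation on $\{1,\ldots,n\}$ and assume that in each connected component of the graph of $R$ there is a dominant vertex. Then for every $a\in A(R)$ one has $a\succeq 0$ if and only if there exist finitely many $b_1,\ldots,b_k\in A(R)$ with $a=\sum_{i=1}^k b_i\star b_i^*$.
   Context: A tolerance relation on a set $X$ is a reflexive and symmetric relation $R\subset X\times X$; its graph is the undirected graph with vertex set $X$ and an edge between $i\neq j$ whenever $(i,j)\in R$. A dominant vertex of a graph is a vertex adjacent to all other vertices (here: of its connected component). Let $T:M_n(\mathbb{C})\to M_n(\mathbb{C})$, $T(b)=\sum_{(i,j)\in R}E_{ii}bE_{jj}$ (i.e. $T$ sets to zero the entries in positions $(i,j)\notin R$), where $E_{ij}$ are matrix units. $A(R)=T(M_n(\mathbb{C}))$, with product $a\star b:=T(ab)$ and involution the conjugate transpose. For $a\in A(R)$, write $a\succeq 0$ if there exists a positive semidefinite $b\in M_n(\mathbb{C})$ with $a=T(b)$. *)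

theory Defs
  imports "HOL-Analysis.Analysis"
begin

text \<open>n x n complex matrices are modelled as complex^'n^'n for a finite index type 'n
  (so n = CARD('n)); a relation on the index set is a set of pairs.\<close>

definition tolerance :: "('n \<times> 'n) set \<Rightarrow> bool" where
  "tolerance R \<longleftrightarrow> refl R \<and> sym R"

text \<open>Graph of R: edge between i \<noteq> j iff (i,j) \<in> R. Two vertices lie in the same
  connected component iff they are related by the reflexive transitive closure of R.\<close>

definition dominant_vertex :: "('n \<times> 'n) set \<Rightarrow> 'n \<Rightarrow> bool" where
  "dominant_vertex R d \<longleftrightarrow> (\<forall>j. (d, j) \<in> R\<^sup>* \<and> j \<noteq> d \<longrightarrow> (d, j) \<in> R)"

definition each_component_has_dominant :: "('n \<times> 'n) set \<Rightarrow> bool" where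
  "each_component_has_dominant R \<longleftrightarrow>
     (\<forall>i. \<exists>d. (i, d) \<in> R\<^sup>* \<and> dominant_vertex R d)"

definition Tmap :: "('n \<times> 'n) set \<Rightarrow> complex^'n^'n \<Rightarrow> complex^'n^'n" where
  "Tmap R b = (\<chi> i j. if (i, j) \<in> R then b $ i $ j else 0)"

definition AR :: "('n::finite \<times> 'n) set \<Rightarrow> (complex^'n^'n) set" where
  "AR R = range (Tmap R)"

definition star_prod :: "('n::finite \<times> 'n) set \<Rightarrow> complex^'n^'n \<Rightarrow> complex^'n^'n \<Rightarrow> complex^'n^'n" where
  "star_prod R a b = Tmap R (a ** b)"

definition adjoint_mat :: "complex^'n^'n \<Rightarrow> complex^'n^'n" where
  "adjoint_mat b = (\<chi> i j. cnj (b $ j $ i))"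

definition psd :: "complex^'n::finite^'n \<Rightarrow> bool" where
  "psd b \<longleftrightarrow> adjoint_mat b = b \<and>
     (\<forall>x :: complex^'n. 0 \<le> Re (\<Sum>i\<in>UNIV. \<Sum>j\<in>UNIV. cnj (x $ i) * b $ i $ j * x $ j))"

definition succeq0 :: "('n::finite \<times> 'n) set \<Rightarrow> complex^'n^'n \<Rightarrow> bool" where
  "succeq0 R a \<longleftrightarrow> (\<exists>b. psd b \<and> a = Tmap R b)"

end

theory Submission
  imports Defs
begin

text \<open>
  Every positive semidefinite matrix b is a finite sum of rank-one matrices v v*: if the
  diagonal entry b(p,p) vanishes, positivity forces row p of b to vanish; otherwise the
  Schur complement b - b(.,p) b(p,.) / b(p,p) is again positive semidefinite with row p
  zero, so the rows can be cleared one at a time.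

  Let d(i) be a dominant vertex of the component of i, chosen once per component, and for
  a vector v let c be the matrix whose row i has the single nonzero entry v(i), in column
  d(i). Then c lies in A(R) since i is adjacent to d(i), and (c c*)(i,j) = v(i) conj(v(j))
  whenever d(i) = d(j), in particular for (i,j) in R; hence T(v v*) = c \<star> c*.
  Conversely, the sum of the b_k \<star> b_k* is T applied to the positive semidefinite
  matrix sum of the b_k b_k*.
\<close>

definition sesq :: "complex^'n::finite^'n \<Rightarrow> complex^'n \<Rightarrow> complex^'n \<Rightarrow> complex" where
  "sesq b x y = (\<Sum>i\<in>UNIV. cnj (x$i) * (b *v y)$i)"

lemma psd_iff_sesq: "psd b \<longleftrightarrow> adjoint_mat b = b \<and> (\<forall>x. 0 \<le> Re (sesq b x x))"
  by (simp add: psd_def sesq_def matrix_vector_mult_def sum_distrib_left mult.assoc)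

lemma sesq_add_left: "sesq b (x + y) z = sesq b x z + sesq b y z"
  by (simp add: sesq_def distrib_right sum.distrib)

lemma sesq_add_right: "sesq b x (y + z) = sesq b x y + sesq b x z"
  by (simp add: sesq_def matrix_vector_right_distrib distrib_left sum.distrib)

lemma sesq_scale_left: "sesq b (c *s x) y = cnj c * sesq b x y"
  by (simp add: sesq_def sum_distrib_left mult.assoc)

lemma sesq_scale_right: "sesq b x (c *s y) = c * sesq b x y"
  by (simp add: sesq_def matrix_vector_mult_def sum_distrib_left mult_ac)

lemma sesq_add_matrix: "sesq (b + c) x y = sesq b x y + sesq c x y"
  by (simp add: sesq_def matrix_vector_mult_add_rdistrib distrib_left sum.distrib)

lemma sesq_diff_matrix: "sesq (b - c) x y = sesq b x y - sesq c x y"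
  by (simp add: sesq_def matrix_vector_mult_diff_rdistrib right_diff_distrib sum_subtractf)

lemma sesq_axis_left: "sesq b (axis p 1) y = (b *v y)$p"
proof -
  have "cnj (axis p 1 $ i) * (b *v y)$i = (if i = p then (b *v y)$i else 0)" for i
    by (simp add: axis_def)
  then show ?thesis
    by (simp add: sesq_def)
qed

lemma matrix_vector_mult_axis_nth: "(b *v axis p 1)$i = b$i$p"
proof -
  have "b$i$j * axis p 1 $ j = (if j = p then b$i$j else 0)" for j
    by (simp add: axis_def)
  then show ?thesis
    by (simp add: matrix_vector_mult_def)
qed

lemma hermitian_cnj_entry: "adjoint_mat b = b \<Longrightarrow> cnj (b$i$j) = b$j$i"
  by (simp add: adjoint_mat_def vec_eq_iff)

lemma hermitian_sesq_swap:
  assumes "adjoint_mat b = b"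
  shows "sesq b y x = cnj (sesq b x y)"
proof -
  have "sesq b y x = (\<Sum>i\<in>UNIV. \<Sum>j\<in>UNIV. cnj (y$i) * b$i$j * x$j)"
    by (simp add: sesq_def matrix_vector_mult_def sum_distrib_left mult.assoc)
  also have "\<dots> = (\<Sum>j\<in>UNIV. \<Sum>i\<in>UNIV. cnj (cnj (x$j) * b$j$i * y$i))"
    by (subst sum.swap) (simp add: hermitian_cnj_entry[OF assms] mult_ac)
  also have "\<dots> = cnj (sesq b x y)"
    by (simp add: sesq_def matrix_vector_mult_def sum_distrib_left mult.assoc)
  finally show ?thesis .
qed

lemma hermitian_sesq_add_axis:
  assumes "adjoint_mat b = b"
  shows "sesq b (x + t *s axis p 1) (x + t *s axis p 1)
    = sesq b x x + t * cnj ((b *v x)$p) + cnj t * (b *v x)$p + cnj t * t * b$p$p"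
  using hermitian_sesq_swap[OF assms, of x "axis p 1"]
  by (simp add: sesq_add_left sesq_add_right sesq_scale_left sesq_scale_right sesq_axis_left
      matrix_vector_mult_axis_nth algebra_simps)

definition rank_one :: "complex^'n \<Rightarrow> complex^'n^'n" where
  "rank_one v = (\<chi> i j. v$i * cnj (v$j))"

lemma adjoint_rank_one: "adjoint_mat (rank_one v) = rank_one v"
  by (simp add: adjoint_mat_def rank_one_def vec_eq_iff mult.commute)

lemma adjoint_mat_diff: "adjoint_mat (a - b) = adjoint_mat a - adjoint_mat b"
  by (simp add: adjoint_mat_def vec_eq_iff)

lemma sesq_rank_one:
  "sesq (rank_one v) x y = cnj (\<Sum>i\<in>UNIV. cnj (v$i) * x$i) * (\<Sum>j\<in>UNIV. cnj (v$j) * y$j)"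
  unfolding sesq_def rank_one_def matrix_vector_mult_def
  by (simp add: sum_product sum_distrib_left mult_ac) (rule sum.swap)

lemma cnj_mult_self: "cnj z * z = of_real ((cmod z)\<^sup>2)"
  by (metis complex_norm_square mult.commute)

lemma psd_rank_one: "psd (rank_one v)"
  unfolding psd_iff_sesq sesq_rank_one cnj_mult_self
  by (simp add: adjoint_mat_def rank_one_def vec_eq_iff mult.commute)

lemma psd_zero: "psd 0"
  by (simp add: psd_def adjoint_mat_def vec_eq_iff)

lemma psd_add: "psd a \<Longrightarrow> psd b \<Longrightarrow> psd (a + b)"
  by (simp add: psd_iff_sesq sesq_add_matrix adjoint_mat_def vec_eq_iff)

lemma psd_sum: "(\<And>x. x \<in> A \<Longrightarrow> psd (f x)) \<Longrightarrow> psd (sum f A)"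
  by (induction A rule: infinite_finite_induct) (simp_all add: psd_zero psd_add)

lemma mult_adjoint_eq_sum_rank_one:
  "c ** adjoint_mat c = (\<Sum>l\<in>UNIV. rank_one (column l c))"
  by (simp add: vec_eq_iff matrix_matrix_mult_def adjoint_mat_def rank_one_def column_def)

lemma psd_mult_adjoint: "psd (c ** adjoint_mat c)"
  unfolding mult_adjoint_eq_sum_rank_one by (rule psd_sum) (rule psd_rank_one)

lemma psd_diag_real_nonneg:
  assumes "psd b"
  obtains r where "0 \<le> r" "b$p$p = of_real r"
proof
  have "b$p$p = cnj (b$p$p)"
    using assms hermitian_cnj_entry[of b p p] unfolding psd_iff_sesq by simp
  then show "b$p$p = of_real (Re (b$p$p))"
    by (metis Reals_cnj_iff of_real_Re)
  have "0 \<le> Re (sesq b (axis p 1) (axis p 1))"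
    using assms by (simp add: psd_iff_sesq)
  then show "0 \<le> Re (b$p$p)"
    by (simp add: sesq_axis_left matrix_vector_mult_axis_nth)
qed

lemma psd_zero_diag_row:
  assumes "psd b" "b$p$p = 0"
  shows "b$p$j = 0"
proof (rule ccontr)
  assume nonzero: "b$p$j \<noteq> 0"
  \<comment> \<open>As b(p,p) = 0, the form at x - s b(p,j) e_p is affine in s with slope -2|b(p,j)|^2.\<close>
  define x where "x = (axis j 1 :: complex^_)"
  define q where "q = Re (sesq b x x)"
  define s where "s = (q + 1) / (2 * (cmod (b$p$j))\<^sup>2)"
  have hermitian: "adjoint_mat b = b"
    using assms(1) by (simp add: psd_iff_sesq)
  have "0 \<le> Re (sesq b (x + (- of_real s * b$p$j) *s axis p 1)
                        (x + (- of_real s * b$p$j) *s axis p 1))"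
    using assms(1) by (simp add: psd_iff_sesq)
  also have "\<dots> = q - 2 * s * (cmod (b$p$j))\<^sup>2"
  proof -
    have "cnj (b$p$j) * b$p$j = of_real ((cmod (b$p$j))\<^sup>2)"
      and "b$p$j * cnj (b$p$j) = of_real ((cmod (b$p$j))\<^sup>2)"
      by (simp_all only: cnj_mult_self complex_norm_square)
    then show ?thesis
      unfolding hermitian_sesq_add_axis[OF hermitian] q_def x_def
      by (simp add: assms(2) matrix_vector_mult_axis_nth mult.assoc)
  qed
  also have "\<dots> = -1"
    using nonzero by (simp add: s_def field_simps)
  finally show False by simp
qed

definition pivot_vector :: "complex^'n^'n \<Rightarrow> 'n \<Rightarrow> complex^'n" where
  "pivot_vector b p = of_real (1 / sqrt (Re (b$p$p))) *s column p b"

lemma rank_one_pivot_vector_entry: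
  assumes "adjoint_mat b = b" "b$p$p = of_real r" "0 < r"
  shows "rank_one (pivot_vector b p) $ i $ j = b$i$p * b$p$j / of_real r"
proof -
  have "of_real (1 / sqrt r) * of_real (1 / sqrt r) = (1 / of_real r :: complex)"
    using assms(3) by (simp flip: of_real_mult)
  then show ?thesis
    using assms(2) hermitian_cnj_entry[OF assms(1), of j p]
    by (simp add: rank_one_def pivot_vector_def column_def mult_ac)
qed

lemma psd_minus_rank_one_pivot_vector:
  assumes "psd b" "b$p$p = of_real r" "0 < r"
  shows "psd (b - rank_one (pivot_vector b p))"
  unfolding psd_iff_sesq
proof (intro conjI allI)
  have hermitian: "adjoint_mat b = b"
    using assms(1) by (simp add: psd_iff_sesq)
  then show "adjoint_mat (b - rank_one (pivot_vector b p)) = b - rank_one (pivot_vector b p)"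
    by (simp add: adjoint_mat_diff adjoint_rank_one)
  fix x
  define w where "w = (b *v x)$p"
  have "(\<Sum>i\<in>UNIV. cnj (pivot_vector b p $ i) * x$i) = of_real (1 / sqrt r) * w"
    using assms(2) hermitian_cnj_entry[OF hermitian, of _ p]
    by (simp add: pivot_vector_def column_def w_def matrix_vector_mult_def sum_distrib_left mult.assoc)
  then have "sesq (rank_one (pivot_vector b p)) x x = cnj w * w / of_real r"
    using assms(3) by (simp add: sesq_rank_one mult_ac flip: of_real_mult)
  then have "sesq (b - rank_one (pivot_vector b p)) x x
      = sesq b (x + (- w / of_real r) *s axis p 1) (x + (- w / of_real r) *s axis p 1)"
    unfolding sesq_diff_matrix hermitian_sesq_add_axis[OF hermitian]
    using assms(2,3) by (simp add: w_def field_simps)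
  then show "0 \<le> Re (sesq (b - rank_one (pivot_vector b p)) x x)"
    using assms(1) by (simp add: psd_iff_sesq)
qed

lemma psd_rows_in_imp_sum_rank_one:
  assumes "finite S" "psd b" "\<And>i j. i \<notin> S \<Longrightarrow> b$i$j = 0"
  shows "\<exists>(k::nat) vs. b = (\<Sum>l<k. rank_one (vs l))"
  using assms
proof (induction S arbitrary: b rule: finite_induct)
  case empty
  then have "b = 0"
    by (simp add: vec_eq_iff)
  then show ?case
    by (metis lessThan_0 sum.empty)
next
  case (insert p S)
  obtain r where "0 \<le> r" and r: "b$p$p = of_real r"
    using psd_diag_real_nonneg[OF insert.prems(1)] .
  show ?case
  proof (cases "r = 0")
    case True
    then have "b$i$j = 0" if "i \<notin> S" for i j
      using that insert.prems psd_zero_diag_row[of b p j] r by (cases "i = p") auto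
    then show ?thesis
      using insert.IH insert.prems(1) by blast
  next
    case False
    then have "0 < r"
      using \<open>0 \<le> r\<close> by simp
    define v where "v = pivot_vector b p"
    have hermitian: "adjoint_mat b = b"
      using insert.prems(1) by (simp add: psd_iff_sesq)
    have "psd (b - rank_one v)"
      unfolding v_def using insert.prems(1) r \<open>0 < r\<close> by (rule psd_minus_rank_one_pivot_vector)
    moreover have "(b - rank_one v)$i$j = 0" if "i \<notin> S" for i j
      using that insert.prems(2)[of i j] insert.prems(2)[of i p] \<open>0 < r\<close>
      unfolding v_def by (cases "i = p") (auto simp: rank_one_pivot_vector_entry[OF hermitian r] r)
    ultimately obtain k :: nat and vs where vs: "b - rank_one v = (\<Sum>l<k. rank_one (vs l))"
      using insert.IH by blast
    have "b = (\<Sum>l<Suc k. rank_one (case_nat v vs l))"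
      unfolding sum.lessThan_Suc_shift using vs by (simp add: algebra_simps)
    then show ?thesis
      by blast
  qed
qed

lemma psd_imp_sum_rank_one:
  fixes b :: "complex^'n::finite^'n"
  assumes "psd b"
  shows "\<exists>(k::nat) vs. b = (\<Sum>l<k. rank_one (vs l))"
  using psd_rows_in_imp_sum_rank_one[of UNIV b] assms by simp

lemma Tmap_sum: "Tmap R (sum f A) = (\<Sum>x\<in>A. Tmap R (f x))"
  by (simp add: Tmap_def vec_eq_iff)

definition dominant_of :: "('n \<times> 'n) set \<Rightarrow> 'n \<Rightarrow> 'n" where
  "dominant_of R i = (SOME d. (i, d) \<in> R\<^sup>* \<and> dominant_vertex R d)"

lemma dominant_of_eq:
  assumes "sym R" "(i, j) \<in> R"
  shows "dominant_of R i = dominant_of R j"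
proof -
  have "(i, d) \<in> R\<^sup>* \<longleftrightarrow> (j, d) \<in> R\<^sup>*" for d
    using assms by (meson converse_rtrancl_into_rtrancl symD)
  then show ?thesis
    unfolding dominant_of_def by simp
qed

lemma adjacent_dominant_of:
  assumes "tolerance R" "each_component_has_dominant R"
  shows "(i, dominant_of R i) \<in> R"
proof -
  let ?d = "dominant_of R i"
  have "refl R" "sym R"
    using assms(1) by (simp_all add: tolerance_def)
  have "\<exists>d. (i, d) \<in> R\<^sup>* \<and> dominant_vertex R d"
    using assms(2) by (simp add: each_component_has_dominant_def)
  then have "(i, ?d) \<in> R\<^sup>*" "dominant_vertex R ?d"
    unfolding dominant_of_def by (metis (mono_tags, lifting) someI_ex)+
  moreover have "(?d, i) \<in> R\<^sup>*"
    using \<open>(i, ?d) \<in> R\<^sup>*\<close> \<open>sym R\<close> by (meson sym_rtrancl symD)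
  ultimately show ?thesis
    using \<open>refl R\<close> \<open>sym R\<close> unfolding dominant_vertex_def
    by (metis refl_onD UNIV_I symD)
qed

definition dominant_factor :: "('n \<times> 'n) set \<Rightarrow> complex^'n \<Rightarrow> complex^'n^'n" where
  "dominant_factor R v = (\<chi> i j. if j = dominant_of R i then v$i else 0)"

lemma dominant_factor_in_AR:
  assumes "tolerance R" "each_component_has_dominant R"
  shows "dominant_factor R v \<in> AR R"
proof -
  have "Tmap R (dominant_factor R v) = dominant_factor R v"
    using adjacent_dominant_of[OF assms] by (auto simp: Tmap_def dominant_factor_def vec_eq_iff)
  then show ?thesis
    unfolding AR_def by (metis rangeI)
qed

lemma dominant_factor_mult_adjoint:
  "dominant_factor R v ** adjoint_mat (dominant_factor R v)
    = (\<chi> i j. if dominant_of R i = dominant_of R j then v$i * cnj (v$j) else 0)"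
proof -
  have "(if l = dominant_of R i then v$i else 0) * cnj (if l = dominant_of R j then v$j else 0)
      = (if l = dominant_of R i then (if dominant_of R i = dominant_of R j then v$i * cnj (v$j) else 0) else 0)"
    for i j l
    by simp
  then show ?thesis
    by (simp add: vec_eq_iff matrix_matrix_mult_def adjoint_mat_def dominant_factor_def)
qed

lemma star_prod_dominant_factor:
  assumes "sym R"
  shows "star_prod R (dominant_factor R v) (adjoint_mat (dominant_factor R v)) = Tmap R (rank_one v)"
  using dominant_of_eq[OF assms]
  by (simp add: star_prod_def dominant_factor_mult_adjoint Tmap_def rank_one_def vec_eq_iff)

theorem proposition4p4:
  fixes R :: "('n::finite \<times> 'n) set" and a :: "complex^'n^'n"
  assumes "tolerance R"
    and "each_component_has_dominant R"
    and "a \<in> AR R"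
  shows "succeq0 R a \<longleftrightarrow>
    (\<exists>k (b :: nat \<Rightarrow> complex^'n^'n). (\<forall>i<k. b i \<in> AR R) \<and>
        a = (\<Sum>i<k. star_prod R (b i) (adjoint_mat (b i))))"
proof
  assume "succeq0 R a"
  then obtain b where "psd b" and a: "a = Tmap R b"
    unfolding succeq0_def by blast
  then obtain k :: nat and vs where "b = (\<Sum>l<k. rank_one (vs l))"
    using psd_imp_sum_rank_one by blast
  then have "a = (\<Sum>l<k. star_prod R (dominant_factor R (vs l)) (adjoint_mat (dominant_factor R (vs l))))"
    using a assms(1) by (simp add: Tmap_sum star_prod_dominant_factor tolerance_def)
  moreover have "\<forall>l<k. dominant_factor R (vs l) \<in> AR R"
    using dominant_factor_in_AR[OF assms(1,2)] by blast
  ultimately show "\<exists>k (b :: nat \<Rightarrow> complex^'n^'n). (\<forall>i<k. b i \<in> AR R) \<and>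
      a = (\<Sum>i<k. star_prod R (b i) (adjoint_mat (b i)))"
    by (intro exI[where x = k] exI[where x = "\<lambda>l. dominant_factor R (vs l)"]) simp
next
  assume "\<exists>k (b :: nat \<Rightarrow> complex^'n^'n). (\<forall>i<k. b i \<in> AR R) \<and>
      a = (\<Sum>i<k. star_prod R (b i) (adjoint_mat (b i)))"
  then obtain k :: nat and b where "a = (\<Sum>i<k. star_prod R (b i) (adjoint_mat (b i)))"
    by blast
  then have "a = Tmap R (\<Sum>i<k. b i ** adjoint_mat (b i))"
    by (simp add: star_prod_def Tmap_sum)
  moreover have "psd (\<Sum>i<k. b i ** adjoint_mat (b i))"
    by (simp add: psd_sum psd_mult_adjoint)
  ultimately show "succeq0 R a"
    unfolding succeq0_def by blast
qed

end
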